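(* Assume the standing hypotheses (H) below and let $G=\mathcal P^{-1}(\Omega)$. Suppose that $\Omega$ acts freely on $C$ and that $G=\mathbb{Z}^p\rtimes\Omega$, i.e. there is a subgroup $\tilde\Omega\subset G$ such that $\mathcal P$ restricts to an isomorphism $\tilde\Omega\to\Omega$, with inverse $\iota:\Omega\to\tilde\Omega$. Then there exists a smooth map $s:C\to E^{p-q}$ such that, with the diffeomorphism $\varphi(a,x)=(a+s(x),x)$ of $\mathbb{R}^p\times C$, for every $\omega\in\Omega$ the map $\varphi^{-1}\circ\iota(\omega)\circ\varphi$ is of the form $(a,x)\mapsto(A_\omega a+c_\omega,\omega|_C(x))$ with $A_\omega$ the linear part of $\omega$ and $c_\omega\in E^q$ a constant vector.
   Context: Bundle automorphisms: fix integers $p\ge q\ge1$, a simply connected manifold $C$ and a decomposition $\mathbb{R}^p=E^q\oplus E^{p-q}$ with $\dim E^q=q$. An automorphism of the trivial bundle $\mathbb{R}^p\times C\to C$ is a map $(a,x)\mapsto(Aa+f(x),\varphi(x))$ with $A\in\mathrm{GL}_p(\mathbb{R})$ (linear part), $f\in C^\infty(C,\mathbb{R}^p)$ (translation part), $\varphi\in\mathrm{Diff}(C)$. $\mathrm{Aut}^{\mathbb{Z}}_{E^q}(\mathbb{R}^p\times C\to C)$ is the set of those with $A\in\mathrm{GL}_p(\mathbb{Z})$ and the projection of $f$ onto $E^q$ parallel to $E^{p-q}$ constant. An automorphism of the trivial bundle $(S^1)^p\times C\to C$, $(S^1)^p=\mathbb{R}^p/\mathbb{Z}^p$, is a map $(\bar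 a,x)\mapsto(A\bar a+\bar f(x),\varphi(x))$ with $A\in\mathrm{GL}_p(\mathbb{Z})$, $\bar f\in C^\infty(C,(S^1)^p)$, $\varphi\in\mathrm{Diff}(C)$; each lifts to an automorphism of $\mathbb{R}^p\times C\to C$, lifts differing by translations by $\mathbb{Z}^p$. $\mathrm{Aut}_{E^q}((S^1)^p\times C\to C)$ is the set of those whose lifts lie in $\mathrm{Aut}^{\mathbb{Z}}_{E^q}(\mathbb{R}^p\times C\to C)$, and $\mathcal P:\mathrm{Aut}^{\mathbb{Z}}_{E^q}(\mathbb{R}^p\times C\to C)\to\mathrm{Aut}_{E^q}((S^1)^p\times C\to C)$ is the reduction modulo $\mathbb{Z}^p$. The linear part and the restriction $\omega|_C=\varphi$ of $\omega\in\mathrm{Aut}_{E^q}((S^1)^p\times C\to C)$ are well defined. Standing hypotheses (H): $p\ge2$ and $\Omega$ is a discrete subgroup of $\mathrm{Aut}_{E^q}((S^1)^p\times C\to C)$ such that (i) the action of $\Omega$ on $C$ given by $\omega\mapsto\omega|_C$ is proper and cocompact; (ii) the linear part of every $\omega\in\Omega$ preserves $E^q$ and $E^{p-q}$; (iii) there is a scalar product $g_{E^q}$ on $E^q$ such that the restriction to $E^q$ of the linear part of every $\omega\in\Omega$ is a similarity of $g_{E^q}$, not all of them isometries; (iv) if $\omega\in\Omega\setminus\{\mathrm{id}\}$ and $\omega|_C(x)=x$ for some $x\in C$, then no element of $\mathcal P^{-1}(\omega)$ has a fixed point in $\mathbb{R}^p\times\{x\}$. *)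

theory Defs
  imports "HOL-Analysis.Analysis"
begin

fun Ck_on :: "nat \<Rightarrow> 'a::euclidean_space set \<Rightarrow> ('a \<Rightarrow> 'b::real_normed_vector) \<Rightarrow> bool" where
  "Ck_on 0 U f = continuous_on U f"
| "Ck_on (Suc k) U f =
     (\<exists>f'. (\<forall>x\<in>U. (f has_derivative f' x) (at x)) \<and> (\<forall>v. Ck_on k U (\<lambda>x. f' x v)))"

definition smooth_on :: "'a::euclidean_space set \<Rightarrow> ('a \<Rightarrow> 'b::real_normed_vector) \<Rightarrow> bool" where
  "smooth_on U f \<longleftrightarrow> (\<forall>k. Ck_on k U f)"

definition chart :: "'c::topological_space set \<Rightarrow> ('c \<Rightarrow> real^'n) \<Rightarrow> bool" where
  "chart U \<psi> \<longleftrightarrow> open U \<and> open (\<psi> ` U) \<and> homeomorphism U (\<psi> ` U) \<psi> (inv_into U \<psi>)"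

definition smooth_atlas :: "('c::topological_space set \<times> ('c \<Rightarrow> real^'n)) set \<Rightarrow> bool" where
  "smooth_atlas At \<longleftrightarrow>
     (\<forall>(U,\<psi>)\<in>At. chart U \<psi>) \<and> (\<Union>(U,\<psi>)\<in>At. U) = UNIV \<and>
     (\<forall>(U,\<psi>)\<in>At. \<forall>(V,\<kappa>)\<in>At. smooth_on (\<psi> ` (U \<inter> V)) (\<kappa> \<circ> inv_into U \<psi>))"

definition smooth_fun :: "('c::topological_space set \<times> ('c \<Rightarrow> real^'n)) set \<Rightarrow> ('c \<Rightarrow> 'b::real_normed_vector) \<Rightarrow> bool" where
  "smooth_fun At f \<longleftrightarrow> (\<forall>(U,\<psi>)\<in>At. smooth_on (\<psi> ` U) (f \<circ> inv_into U \<psi>))"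

definition smooth_map :: "('c::topological_space set \<times> ('c \<Rightarrow> real^'n)) set \<Rightarrow> ('c \<Rightarrow> 'c) \<Rightarrow> bool" where
  "smooth_map At \<phi> \<longleftrightarrow> continuous_on UNIV \<phi> \<and>
     (\<forall>(U,\<psi>)\<in>At. \<forall>(V,\<kappa>)\<in>At. smooth_on (\<psi> ` (U \<inter> \<phi> -` V)) (\<kappa> \<circ> \<phi> \<circ> inv_into U \<psi>))"

definition diffeo :: "('c::topological_space set \<times> ('c \<Rightarrow> real^'n)) set \<Rightarrow> ('c \<Rightarrow> 'c) \<Rightarrow> bool" where
  "diffeo At \<phi> \<longleftrightarrow> bij \<phi> \<and> smooth_map At \<phi> \<and> smooth_map At (inv \<phi>)"

definition Zvec :: "(real^'p) set" where
  "Zvec = {k. \<forall>i. k $ i \<in> \<int>}"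

definition int_matrix :: "real^'p^'p \<Rightarrow> bool" where
  "int_matrix A \<longleftrightarrow> (\<forall>i j. A $ i $ j \<in> \<int>)"

definition GLZ :: "real^'p^'p \<Rightarrow> bool" where
  "GLZ A \<longleftrightarrow> invertible A \<and> int_matrix A \<and> int_matrix (matrix_inv A)"

definition complementary :: "(real^'p) set \<Rightarrow> (real^'p) set \<Rightarrow> bool" where
  "complementary E1 E2 \<longleftrightarrow> subspace E1 \<and> subspace E2 \<and> E1 \<inter> E2 = {0} \<and>
     {u + v | u v. u \<in> E1 \<and> v \<in> E2} = UNIV"

definition proj :: "(real^'p) set \<Rightarrow> (real^'p) set \<Rightarrow> real^'p \<Rightarrow> real^'p" where
  "proj E1 E2 v = (THE u. u \<in> E1 \<and> v - u \<in> E2)"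

text \<open>An automorphism (a,x) |-> (A a + f x, phi x) of R^p x C is represented by the
  triple (A, f, phi) (linear part, translation part, diffeomorphism of C).\<close>

type_synonym ('p,'c) baut = "(real^'p^'p) \<times> ('c \<Rightarrow> real^'p) \<times> ('c \<Rightarrow> 'c)"

definition bmap :: "('p::finite,'c) baut \<Rightarrow> (real^'p) \<times> 'c \<Rightarrow> (real^'p) \<times> 'c" where
  "bmap T = (case T of (A, f, \<phi>) \<Rightarrow> (\<lambda>(a, x). (A *v a + f x, \<phi> x)))"

definition tcomp :: "('p::finite,'c) baut \<Rightarrow> ('p::finite,'c) baut \<Rightarrow> ('p::finite,'c) baut" where
  "tcomp T S = (case T of (A, f, \<phi>) \<Rightarrow> case S of (B, g, \<psi>) \<Rightarrow>
      (A ** B, \<lambda>x. A *v g x + f (\<psi> x), \<phi> \<circ> \<psi>))"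

definition tid :: "('p::finite,'c) baut" where
  "tid = (mat 1, \<lambda>_. 0, id)"

definition tinv :: "('p::finite,'c) baut \<Rightarrow> ('p::finite,'c) baut" where
  "tinv T = (case T of (A, f, \<phi>) \<Rightarrow>
      (matrix_inv A, \<lambda>x. - (matrix_inv A *v f (inv \<phi> x)), inv \<phi>))"

definition autZ :: "('c::topological_space set \<times> ('c \<Rightarrow> real^'n)) set \<Rightarrow> (real^'p) set \<Rightarrow> (real^'p) set
                     \<Rightarrow> ('p::finite,'c) baut \<Rightarrow> bool" where
  "autZ At E1 E2 T \<longleftrightarrow> (case T of (A, f, \<phi>) \<Rightarrow>
      GLZ A \<and> smooth_fun At f \<and> diffeo At \<phi> \<and> (\<exists>c. \<forall>x. proj E1 E2 (f x) = c))"

text \<open>Reduction modulo Z^p: an automorphism of the torus bundle (S^1)^p x C is represented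
  by the set of all its lifts, i.e. the class of a lift modulo translations by Z^p.
  Thus P is this class map, and P^{-1}(Omega) is the union of the classes in Omega.\<close>
definition Pcls :: "('p::finite,'c) baut \<Rightarrow> ('p::finite,'c) baut set" where
  "Pcls T = (case T of (A, f, \<phi>) \<Rightarrow> {(A, \<lambda>x. f x + k, \<phi>) | k. k \<in> Zvec})"

definition autT :: "('c::topological_space set \<times> ('c \<Rightarrow> real^'n)) set \<Rightarrow> (real^'p) set \<Rightarrow> (real^'p) set
                     \<Rightarrow> ('p::finite,'c) baut set set" where
  "autT At E1 E2 = Pcls ` {T. autZ At E1 E2 T}"

definition linpart :: "('p::finite,'c) baut set \<Rightarrow> real^'p^'p" where
  "linpart \<omega> = fst (SOME T. T \<in> \<omega>)"

definition resC :: "('p::finite,'c) baut set \<Rightarrow> 'c \<Rightarrow> 'c" where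
  "resC \<omega> = snd (snd (SOME T. T \<in> \<omega>))"

definition is_subgroupT :: "('c::topological_space set \<times> ('c \<Rightarrow> real^'n)) set \<Rightarrow> (real^'p) set \<Rightarrow> (real^'p) set
                     \<Rightarrow> ('p::finite,'c) baut set set \<Rightarrow> bool" where
  "is_subgroupT At E1 E2 \<Omega> \<longleftrightarrow> \<Omega> \<subseteq> autT At E1 E2 \<and> Pcls tid \<in> \<Omega> \<and>
     (\<forall>\<omega>1\<in>\<Omega>. \<forall>\<omega>2\<in>\<Omega>. \<forall>T1\<in>\<omega>1. \<forall>T2\<in>\<omega>2. Pcls (tcomp T1 T2) \<in> \<Omega>) \<and>
     (\<forall>\<omega>\<in>\<Omega>. \<forall>T\<in>\<omega>. Pcls (tinv T) \<in> \<Omega>)"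

text \<open>Discreteness, in the compact-open topology (tested on lifts: a subset of the torus-bundle
  automorphisms is discrete iff its full preimage under the covering P is discrete).\<close>
definition discrete_aut :: "('p::finite,'c::topological_space) baut set set \<Rightarrow> bool" where
  "discrete_aut \<Omega> \<longleftrightarrow> (\<forall>T\<in>\<Union>\<Omega>. \<exists>N. finite N \<and>
       (\<forall>(K, W)\<in>N. compact K \<and> open W \<and> bmap T ` K \<subseteq> W) \<and>
       (\<forall>T'\<in>\<Union>\<Omega>. (\<forall>(K, W)\<in>N. bmap T' ` K \<subseteq> W) \<longrightarrow> T' = T))"

definition proper_action :: "('p::finite,'c::topological_space) baut set set \<Rightarrow> bool" where
  "proper_action \<Omega> \<longleftrightarrow> (\<forall>K. compact K \<longrightarrow> finite {\<omega>\<in>\<Omega>. resC \<omega> ` K \<inter> K \<noteq> {}})"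

definition cocompact_action :: "('p::finite,'c::topological_space) baut set set \<Rightarrow> bool" where
  "cocompact_action \<Omega> \<longleftrightarrow> (\<exists>K. compact K \<and> (\<Union>\<omega>\<in>\<Omega>. resC \<omega> ` K) = UNIV)"

definition scalar_product_on :: "(real^'p) set \<Rightarrow> (real^'p \<Rightarrow> real^'p \<Rightarrow> real) \<Rightarrow> bool" where
  "scalar_product_on E g \<longleftrightarrow> bilinear g \<and> (\<forall>u v. g u v = g v u) \<and> (\<forall>u\<in>E. u \<noteq> 0 \<longrightarrow> g u u > 0)"

definition similarity_on :: "(real^'p) set \<Rightarrow> (real^'p \<Rightarrow> real^'p \<Rightarrow> real) \<Rightarrow> real^'p^'p \<Rightarrow> bool" where
  "similarity_on E g A \<longleftrightarrow> (\<exists>r>0. \<forall>u\<in>E. \<forall>v\<in>E. g (A *v u) (A *v v) = r * g u v)"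

definition isometry_on :: "(real^'p) set \<Rightarrow> (real^'p \<Rightarrow> real^'p \<Rightarrow> real) \<Rightarrow> real^'p^'p \<Rightarrow> bool" where
  "isometry_on E g A \<longleftrightarrow> (\<forall>u\<in>E. \<forall>v\<in>E. g (A *v u) (A *v v) = g u v)"

end

theory Submission
  imports Defs "HOL-Computational_Algebra.Polynomial"
begin

text \<open>For a bundle automorphism \<open>T = (A, f, \<phi>)\<close> let \<open>\<sigma>\<^sub>T(x) = -A\<^sup>-\<^sup>1 f(x)\<close> be the point of the
  fibre over \<open>x\<close> that \<open>T\<close> sends to \<open>0\<close>; then \<open>\<sigma>\<^sub>R(\<phi>\<^sub>T x) = A\<^sub>T \<sigma>\<^bsub>R \<circ> T\<^esub>(x) + f\<^sub>T(x)\<close>.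
  Average the \<open>\<sigma>\<^sub>T\<close>, \<open>T \<in> \<iota>(\<Omega>)\<close>, with weights \<open>\<rho>(\<phi>\<^sub>T x)\<close>, where \<open>\<rho> \<ge> 0\<close> is smooth with compact
  support and positive on a compact set whose translates cover \<open>C\<close>: properness makes the sum locally
  finite, cocompactness makes the total weight positive, and reindexing by \<open>R \<mapsto> R \<circ> T\<close> shows that
  the average \<open>\<sigma>\<close> satisfies \<open>\<sigma>(\<phi>\<^sub>T x) = A\<^sub>T \<sigma>(x) + f\<^sub>T(x)\<close>. Conjugation by \<open>\<sigma>\<close> would remove the
  translation parts altogether; conjugation by its \<open>E\<^sup>p\<^sup>-\<^sup>q\<close>-component \<open>s\<close> leaves exactly their
  \<open>E\<^sup>q\<close>-components, which are constant. Only properness, cocompactness, hypothesis (ii) and the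
  splitting \<open>\<iota>\<close> are used: freeness, discreteness, (iii), (iv) and simple connectivity are not.\<close>

section \<open>Calculus of \<open>C\<^sup>k\<close> maps\<close>

lemma Ck_on_SucI:
  "(\<And>x. x \<in> U \<Longrightarrow> (f has_derivative f' x) (at x)) \<Longrightarrow> (\<And>v. Ck_on k U (\<lambda>x. f' x v)) \<Longrightarrow>
   Ck_on (Suc k) U f"
  by (simp only: Ck_on.simps) blast

lemma Ck_on_Suc_imp: "Ck_on (Suc k) U f \<Longrightarrow> Ck_on k U f"
proof (induction k arbitrary: f)
  case 0
  then obtain f' where "\<forall>x\<in>U. (f has_derivative f' x) (at x)" by auto
  then show ?case by (auto intro: continuous_at_imp_continuous_on has_derivative_continuous)
next
  case (Suc k)
  then show ?case by auto
qed

lemma Ck_on_const: "Ck_on k U (\<lambda>x. c)"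
proof (induction k arbitrary: c)
  case (Suc k)
  show ?case by (rule Ck_on_SucI[where f'="\<lambda>x v. 0"]) (simp_all add: Suc)
qed simp

lemma Ck_on_add: "Ck_on k U f \<Longrightarrow> Ck_on k U g \<Longrightarrow> Ck_on k U (\<lambda>x. f x + g x)"
proof (induction k arbitrary: f g)
  case (Suc k)
  from Suc.prems obtain f' g' where
    "\<forall>x\<in>U. (f has_derivative f' x) (at x)" "\<forall>v. Ck_on k U (\<lambda>x. f' x v)"
    "\<forall>x\<in>U. (g has_derivative g' x) (at x)" "\<forall>v. Ck_on k U (\<lambda>x. g' x v)" by auto
  then show ?case
    using Suc.IH by (intro Ck_on_SucI[where f'="\<lambda>x v. f' x v + g' x v"]) (auto intro: has_derivative_add)
qed (simp add: continuous_on_add)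

lemma Ck_on_linear_comp: "bounded_linear l \<Longrightarrow> Ck_on k U f \<Longrightarrow> Ck_on k U (\<lambda>x. l (f x))"
proof (induction k arbitrary: f)
  case 0
  then show ?case by (simp add: linear_continuous_on continuous_on_compose2[of UNIV l])
next
  case (Suc k)
  from Suc.prems obtain f' where "\<forall>x\<in>U. (f has_derivative f' x) (at x)" "\<forall>v. Ck_on k U (\<lambda>x. f' x v)"
    by auto
  then show ?case
    using Suc by (intro Ck_on_SucI[where f'="\<lambda>x v. l (f' x v)"]) (auto intro: bounded_linear.has_derivative)
qed

lemma Ck_on_id: "Ck_on k U (\<lambda>x. x)"
proof (induction k)
  case (Suc k)
  show ?case by (rule Ck_on_SucI[where f'="\<lambda>x v. v"]) (auto intro: Ck_on_const)
qed simp

lemma Ck_on_bounded_linear: "bounded_linear l \<Longrightarrow> Ck_on k U l"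
  using Ck_on_linear_comp[OF _ Ck_on_id, of l k U] by simp

lemma Ck_on_scaleR: "Ck_on k U a \<Longrightarrow> Ck_on k U f \<Longrightarrow> Ck_on k U (\<lambda>x. a x *\<^sub>R f x)"
proof (induction k arbitrary: a f)
  case (Suc k)
  from Suc.prems obtain f' a' where
    df: "\<forall>x\<in>U. (f has_derivative f' x) (at x)" "\<forall>v. Ck_on k U (\<lambda>x. f' x v)" and
    da: "\<forall>x\<in>U. (a has_derivative a' x) (at x)" "\<forall>v. Ck_on k U (\<lambda>x. a' x v)" by auto
  have ak: "Ck_on k U a" and fk: "Ck_on k U f" using Suc.prems Ck_on_Suc_imp by auto
  show ?case
  proof (rule Ck_on_SucI[where f'="\<lambda>x v. a x *\<^sub>R f' x v + a' x v *\<^sub>R f x"])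
    show "((\<lambda>x. a x *\<^sub>R f x) has_derivative (\<lambda>v. a x *\<^sub>R f' x v + a' x v *\<^sub>R f x)) (at x)"
      if "x \<in> U" for x
      using df da that by (auto intro: has_derivative_scaleR)
    show "Ck_on k U (\<lambda>x. a x *\<^sub>R f' x v + a' x v *\<^sub>R f x)" for v
      using Suc.IH ak fk df da Ck_on_add by blast
  qed
qed (simp add: continuous_on_scaleR)

lemma Ck_on_sum:
  "finite I \<Longrightarrow> (\<And>i. i \<in> I \<Longrightarrow> Ck_on k U (f i)) \<Longrightarrow> Ck_on k U (\<lambda>x. \<Sum>i\<in>I. f i x)"
  by (induction I rule: finite_induct) (auto intro: Ck_on_add Ck_on_const)

lemma Ck_on_subset: "Ck_on k U f \<Longrightarrow> W \<subseteq> U \<Longrightarrow> Ck_on k W f"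
proof (induction k arbitrary: f)
  case (Suc k)
  then obtain f' where "\<forall>x\<in>U. (f has_derivative f' x) (at x)" "\<forall>v. Ck_on k U (\<lambda>x. f' x v)" by auto
  then show ?case using Suc by (intro Ck_on_SucI[where f'=f']) auto
qed (auto intro: continuous_on_subset)

lemma Ck_on_cong: "open U \<Longrightarrow> Ck_on k U f \<Longrightarrow> (\<And>x. x \<in> U \<Longrightarrow> f x = g x) \<Longrightarrow> Ck_on k U g"
proof (induction k arbitrary: f g)
  case 0
  then show ?case using continuous_on_cong by auto
next
  case (Suc k)
  from Suc.prems obtain f' where "\<forall>x\<in>U. (f has_derivative f' x) (at x)" "\<forall>v. Ck_on k U (\<lambda>x. f' x v)"
    by auto
  moreover have "\<forall>x\<in>U. (g has_derivative f' x) (at x)"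
    using calculation(1) Suc.prems by (metis has_derivative_transform_within_open)
  ultimately show ?case by (intro Ck_on_SucI[where f'=f']) auto
qed

text \<open>Any witness of differentiability can be replaced by the Fr\'echet derivative; this makes the
  derivatives chosen on different open sets agree, which is what \<open>Ck_on_local\<close> needs.\<close>

lemma Ck_on_Suc_frechet_derivative:
  assumes "Ck_on (Suc k) U f" and "open U"
  shows "\<forall>x\<in>U. (f has_derivative frechet_derivative f (at x)) (at x)"
    and "Ck_on k U (\<lambda>x. frechet_derivative f (at x) v)"
proof -
  from assms obtain f' where df: "\<forall>x\<in>U. (f has_derivative f' x) (at x)" "\<forall>v. Ck_on k U (\<lambda>x. f' x v)"
    by auto
  have eq: "\<forall>x\<in>U. frechet_derivative f (at x) = f' x"
    using df(1) by (metis frechet_derivative_at)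
  then show "\<forall>x\<in>U. (f has_derivative frechet_derivative f (at x)) (at x)" using df(1) by auto
  show "Ck_on k U (\<lambda>x. frechet_derivative f (at x) v)"
    by (rule Ck_on_cong[OF \<open>open U\<close>, where f="\<lambda>x. f' x v"]) (use df eq in auto)
qed

lemma Ck_on_local:
  assumes "open U" "\<And>x. x \<in> U \<Longrightarrow> \<exists>W. open W \<and> x \<in> W \<and> W \<subseteq> U \<and> Ck_on k W f"
  shows "Ck_on k U f"
  using assms
proof (induction k arbitrary: f)
  case 0
  have "isCont f x" if "x \<in> U" for x
  proof -
    obtain W where "open W" "x \<in> W" "Ck_on 0 W f" using "0.prems"(2) \<open>x \<in> U\<close> by blast
    then show ?thesis using continuous_on_eq_continuous_at by auto
  qed
  then show ?case by (simp add: continuous_at_imp_continuous_on)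
next
  case (Suc k)
  show ?case
  proof (rule Ck_on_SucI[where f'="\<lambda>x. frechet_derivative f (at x)"])
    fix x assume "x \<in> U"
    then obtain W where "open W" "x \<in> W" "Ck_on (Suc k) W f" using Suc.prems by blast
    then show "(f has_derivative frechet_derivative f (at x)) (at x)"
      using Ck_on_Suc_frechet_derivative(1) by blast
  next
    fix v
    show "Ck_on k U (\<lambda>x. frechet_derivative f (at x) v)"
    proof (rule Suc.IH[OF Suc.prems(1)])
      fix x assume "x \<in> U"
      then obtain W where "open W" "x \<in> W" "W \<subseteq> U" "Ck_on (Suc k) W f" using Suc.prems by blast
      then show "\<exists>W. open W \<and> x \<in> W \<and> W \<subseteq> U \<and> Ck_on k W (\<lambda>x. frechet_derivative f (at x) v)"
        using Ck_on_Suc_frechet_derivative(2) by blast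
    qed
  qed
qed

lemma Ck_on_compose:
  fixes g :: "'a::euclidean_space \<Rightarrow> 'b::real_normed_vector" and h :: "'c::euclidean_space \<Rightarrow> 'a"
  assumes "open V" "Ck_on k V g" "Ck_on k U h" "h ` U \<subseteq> V" and "open U"
  shows "Ck_on k U (\<lambda>x. g (h x))"
  using assms(1-4)
proof (induction k arbitrary: g h V)
  case 0
  then show ?case using continuous_on_compose2 by auto
next
  case (Suc k)
  from Suc.prems obtain g' where
    dg: "\<forall>y\<in>V. (g has_derivative g' y) (at y)" "\<forall>w. Ck_on k V (\<lambda>y. g' y w)" by auto
  from Suc.prems obtain h' where
    dh: "\<forall>x\<in>U. (h has_derivative h' x) (at x)" "\<forall>v. Ck_on k U (\<lambda>x. h' x v)" by auto
  have hk: "Ck_on k U h" using Suc.prems Ck_on_Suc_imp by blast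
  show ?case
  proof (rule Ck_on_SucI[where f'="\<lambda>x v. g' (h x) (h' x v)"])
    fix x assume "x \<in> U"
    then show "((\<lambda>x. g (h x)) has_derivative (\<lambda>v. g' (h x) (h' x v))) (at x)"
      using dg dh Suc.prems(4) by (intro has_derivative_compose[of h "h' x" x UNIV g "g' (h x)"]) auto
  next
    fix v
    \<comment> \<open>expand \<open>g' (h x)\<close> in a basis, so that only the factors \<open>g' (h x) i\<close> need the induction hypothesis\<close>
    have expand: "g' (h x) (h' x v) = (\<Sum>i\<in>Basis. (h' x v \<bullet> i) *\<^sub>R g' (h x) i)" if "x \<in> U" for x
    proof -
      have "linear (g' (h x))" using dg Suc.prems(4) that
        by (meson bounded_linear.linear has_derivative_bounded_linear image_subset_iff)
      then have "g' (h x) (\<Sum>i\<in>Basis. (h' x v \<bullet> i) *\<^sub>R i) = (\<Sum>i\<in>Basis. (h' x v \<bullet> i) *\<^sub>R g' (h x) i)"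
      by (simp add: linear_sum linear_scale o_def)
    then show ?thesis by (simp add: euclidean_representation)
    qed
    have "Ck_on k U (\<lambda>x. \<Sum>i\<in>Basis. (h' x v \<bullet> i) *\<^sub>R g' (h x) i)"
    proof (rule Ck_on_sum)
      fix i :: 'a
      have "Ck_on k U (\<lambda>x. h' x v \<bullet> i)"
        using Ck_on_linear_comp[OF bounded_linear_inner_left, of k U "\<lambda>x. h' x v" i] dh by auto
      moreover have "Ck_on k U (\<lambda>x. g' (h x) i)"
        using Suc.IH[OF Suc.prems(1), of "\<lambda>y. g' y i" h] dg hk Suc.prems(4) by auto
      ultimately show "Ck_on k U (\<lambda>x. (h' x v \<bullet> i) *\<^sub>R g' (h x) i)" by (rule Ck_on_scaleR)
    qed simp
    then show "Ck_on k U (\<lambda>x. g' (h x) (h' x v))"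
      by (rule Ck_on_cong[OF \<open>open U\<close>]) (use expand in auto)
  qed
qed

lemma Ck_on_DERIV:
  fixes f :: "real \<Rightarrow> real"
  assumes "\<And>x. x \<in> U \<Longrightarrow> DERIV f x :> f2 x" "Ck_on k U f2"
  shows "Ck_on (Suc k) U f"
proof (rule Ck_on_SucI[where f'="\<lambda>x v. f2 x * v"])
  show "(f has_derivative (\<lambda>v. f2 x * v)) (at x)" if "x \<in> U" for x
    using assms(1)[OF that] by (simp add: has_field_derivative_def)
  show "Ck_on k U (\<lambda>x. f2 x * v)" for v
    using Ck_on_scaleR[OF assms(2) Ck_on_const[of k U v]] by simp
qed

lemma Ck_on_inverse: "Ck_on k {0<..} (\<lambda>t::real. inverse t)"
proof (induction k)
  case 0
  then show ?case by (simp add: continuous_on_inverse continuous_on_id)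
next
  case (Suc k)
  have "Ck_on k {0<..} (\<lambda>t::real. - (inverse t * inverse t))"
    using Ck_on_linear_comp[OF bounded_linear_minus[OF bounded_linear_ident] Ck_on_scaleR[OF Suc Suc]]
    by simp
  then show ?case
    by (rule Ck_on_DERIV[rotated]) (auto intro!: derivative_eq_intros simp: power2_eq_square)
qed

section \<open>A smooth bump function on \<open>\<real>\<^sup>n\<close>\<close>

definition flat_exp :: "real poly \<Rightarrow> real \<Rightarrow> real" where
  "flat_exp p t = (if t > 0 then poly p (inverse t) * exp (- inverse t) else 0)"

definition flat_exp_deriv_poly :: "real poly \<Rightarrow> real poly" where
  "flat_exp_deriv_poly p = [:0, 0, 1:] * (p - pderiv p)"

lemma poly_times_exp_minus_tendsto_0:
  fixes p :: "real poly"
  shows "((\<lambda>u. poly p u * exp (- u)) \<longlongrightarrow> 0) at_top"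
proof -
  have "((\<lambda>u. \<Sum>i\<le>degree p. coeff p i * (u ^ i / exp u)) \<longlongrightarrow> 0) at_top"
    by (intro tendsto_null_sum tendsto_mult_right_zero tendsto_power_div_exp_0)
  moreover have "(\<Sum>i\<le>degree p. coeff p i * (u ^ i / exp u)) = poly p u * exp (- u)" for u :: real
    by (simp add: poly_altdef sum_distrib_right exp_minus divide_inverse mult.assoc)
  ultimately show ?thesis by simp
qed

lemma flat_exp_has_derivative: "DERIV (flat_exp p) t :> flat_exp (flat_exp_deriv_poly p) t"
proof (cases t "0::real" rule: linorder_cases)
  case greater
  have "((\<lambda>t. poly p (inverse t) * exp (- inverse t)) has_real_derivative
          flat_exp (flat_exp_deriv_poly p) t) (at t)"
    using greater
    by (auto intro!: derivative_eq_intros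
        simp: flat_exp_def flat_exp_deriv_poly_def power2_eq_square field_simps poly_DERIV[THEN DERIV_chain2])
  then show ?thesis
    by (rule has_field_derivative_transform_within_open[of _ _ _ "{0<..}"])
       (use greater in \<open>auto simp: flat_exp_def\<close>)
next
  case less
  have "((\<lambda>t. 0) has_real_derivative flat_exp (flat_exp_deriv_poly p) t) (at t)"
    using less by (simp add: flat_exp_def)
  then show ?thesis
    by (rule has_field_derivative_transform_within_open[of _ _ _ "{..<0}"])
       (use less in \<open>auto simp: flat_exp_def\<close>)
next
  case equal
  \<comment> \<open>on the right the difference quotient is \<open>flat_exp (pCons 0 p)\<close>, which tends to \<open>0\<close>\<close>
  have "((\<lambda>y. (flat_exp p y - flat_exp p 0) / (y - 0)) \<longlongrightarrow> 0) (at (0::real))"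
  proof (rule filterlim_split_at)
    show "((\<lambda>y. (flat_exp p y - flat_exp p 0) / (y - 0)) \<longlongrightarrow> 0) (at_left 0)"
      by (rule tendsto_eventually)
         (auto simp: flat_exp_def eventually_at_left_field intro!: exI[of _ "-1"])
    have "((\<lambda>t. poly (pCons 0 p) (inverse t) * exp (- inverse t)) \<longlongrightarrow> 0) (at_right (0::real))"
      using filterlim_compose[OF poly_times_exp_minus_tendsto_0 filterlim_inverse_at_top_right,
          of "pCons 0 p"]
      by (simp add: o_def)
    moreover have "\<forall>\<^sub>F y in at_right 0.
        poly (pCons 0 p) (inverse y) * exp (- inverse y) = (flat_exp p y - flat_exp p 0) / (y - 0)"
      by (auto simp: flat_exp_def eventually_at_right_field divide_inverse intro!: exI[of _ 1])
    ultimately show "((\<lambda>y. (flat_exp p y - flat_exp p 0) / (y - 0)) \<longlongrightarrow> 0) (at_right 0)"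
      using tendsto_cong by fastforce
  qed
  then show ?thesis using equal by (simp add: has_field_derivative_iff flat_exp_def)
qed

lemma Ck_on_flat_exp: "Ck_on k UNIV (flat_exp p)"
proof (induction k arbitrary: p)
  case 0
  have "continuous_on UNIV (flat_exp p)"
    using flat_exp_has_derivative DERIV_isCont by (blast intro: continuous_at_imp_continuous_on)
  then show ?case by simp
next
  case (Suc k)
  then show ?case using Ck_on_DERIV[OF flat_exp_has_derivative] by blast
qed

definition bump :: "'a::real_inner \<Rightarrow> real \<Rightarrow> 'a \<Rightarrow> real" where
  "bump c r y = flat_exp [:1:] (r\<^sup>2 - (y - c) \<bullet> (y - c))"

lemma Ck_on_bump: "Ck_on k UNIV (bump (c::'a::euclidean_space) r)"
proof -
  have "Ck_on k UNIV (\<lambda>y::'a. r\<^sup>2 - (y - c) \<bullet> (y - c))"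
  proof (cases k)
    case 0
    then show ?thesis by (simp add: continuous_on_diff continuous_on_inner continuous_on_const continuous_on_id)
  next
    case (Suc m)
    have "Ck_on m UNIV (\<lambda>y::'a. - (2 * (y \<bullet> v)) + 2 * (c \<bullet> v))" for v
      by (intro Ck_on_add Ck_on_const Ck_on_bounded_linear bounded_linear_minus
          bounded_linear_const_mult bounded_linear_inner_left)
    then have "Ck_on m UNIV (\<lambda>y. - ((y - c) \<bullet> v + v \<bullet> (y - c)))" for v
      by (rule Ck_on_cong[OF open_UNIV]) (simp add: inner_diff_left inner_diff_right inner_commute)
    then show ?thesis
      unfolding Suc by (intro Ck_on_SucI[where f'="\<lambda>y v. - ((y - c) \<bullet> v + v \<bullet> (y - c))"])
        (auto intro!: derivative_eq_intros)
  qed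
  then show ?thesis
    unfolding bump_def by (rule Ck_on_compose[OF open_UNIV Ck_on_flat_exp]) auto
qed

lemma bump_nonneg: "bump c r y \<ge> 0"
  by (simp add: bump_def flat_exp_def)

lemma bump_pos_iff: "r > 0 \<Longrightarrow> bump c r y > 0 \<longleftrightarrow> dist y c < r"
proof -
  assume "r > 0"
  have "(y - c) \<bullet> (y - c) = (dist y c)\<^sup>2" by (simp add: dist_norm power2_norm_eq_inner)
  then have "bump c r y > 0 \<longleftrightarrow> (dist y c)\<^sup>2 < r\<^sup>2" by (simp add: bump_def flat_exp_def)
  also have "\<dots> \<longleftrightarrow> dist y c < r"
    using \<open>r > 0\<close> power2_less_imp_less[of "dist y c" r] power_strict_mono[of "dist y c" r 2] by auto
  finally show ?thesis .
qed

context
  fixes At :: "('c::topological_space set \<times> ('c \<Rightarrow> real^'n)) set"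
  assumes atlas: "smooth_atlas At"
begin

lemma atlas_chart:
  assumes "(U,\<psi>) \<in> At"
  shows "open U" "open (\<psi> ` U)" "homeomorphism U (\<psi> ` U) \<psi> (inv_into U \<psi>)"
    and "z \<in> U \<Longrightarrow> inv_into U \<psi> (\<psi> z) = z"
    and "continuous_on U \<psi>" "continuous_on (\<psi> ` U) (inv_into U \<psi>)"
    and "w \<in> \<psi> ` U \<Longrightarrow> inv_into U \<psi> w \<in> U"
proof -
  have "chart U \<psi>" using atlas assms unfolding smooth_atlas_def by auto
  then show "open U" "open (\<psi> ` U)" and hom: "homeomorphism U (\<psi> ` U) \<psi> (inv_into U \<psi>)"
    unfolding chart_def by auto
  show "z \<in> U \<Longrightarrow> inv_into U \<psi> (\<psi> z) = z" "continuous_on U \<psi>" "continuous_on (\<psi> ` U) (inv_into U \<psi>)"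
    "w \<in> \<psi> ` U \<Longrightarrow> inv_into U \<psi> w \<in> U"
    using hom unfolding homeomorphism_def by auto
qed

lemma chart_open_image:
  assumes "(U,\<psi>) \<in> At" "open S"
  shows "open (\<psi> ` (U \<inter> S))"
proof -
  have "openin (top_of_set U) (U \<inter> S)" using assms by auto
  then have "openin (top_of_set (\<psi> ` U)) (\<psi> ` (U \<inter> S))"
    using homeomorphism_imp_open_map atlas_chart(3)[OF assms(1)] by blast
  then show ?thesis using atlas_chart(2)[OF assms(1)] openin_open_trans by blast
qed

lemma atlas_covers: obtains U \<psi> where "(U,\<psi>) \<in> At" "z \<in> U"
proof -
  have "z \<in> (\<Union>(U,\<psi>)\<in>At. U)" using atlas unfolding smooth_atlas_def by auto
  then show ?thesis using that by auto
qed

lemma atlas_transition_Ck: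
  "(V,\<kappa>) \<in> At \<Longrightarrow> (U,\<psi>) \<in> At \<Longrightarrow> Ck_on k (\<kappa> ` (V \<inter> U)) (\<psi> \<circ> inv_into V \<kappa>)"
  using atlas unfolding smooth_atlas_def smooth_on_def by fast

lemma smooth_funI:
  "(\<And>U \<psi> k. (U,\<psi>) \<in> At \<Longrightarrow> Ck_on k (\<psi> ` U) (f \<circ> inv_into U \<psi>)) \<Longrightarrow> smooth_fun At f"
  unfolding smooth_fun_def smooth_on_def by auto

lemma smooth_funD: "smooth_fun At f \<Longrightarrow> (U,\<psi>) \<in> At \<Longrightarrow> Ck_on k (\<psi> ` U) (f \<circ> inv_into U \<psi>)"
  unfolding smooth_fun_def smooth_on_def by fast

lemma smooth_mapD:
  "smooth_map At \<phi> \<Longrightarrow> (U,\<psi>) \<in> At \<Longrightarrow> (V,\<kappa>) \<in> At \<Longrightarrow>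
   Ck_on k (\<psi> ` (U \<inter> \<phi> -` V)) (\<kappa> \<circ> \<phi> \<circ> inv_into U \<psi>)"
  unfolding smooth_map_def smooth_on_def by fast

lemma smooth_fun_local:
  assumes "\<And>z. \<exists>W h. open W \<and> z \<in> W \<and> smooth_fun At h \<and> (\<forall>y\<in>W. f y = h y)"
  shows "smooth_fun At f"
proof (rule smooth_funI)
  fix U \<psi> k assume U: "(U,\<psi>) \<in> At"
  show "Ck_on k (\<psi> ` U) (f \<circ> inv_into U \<psi>)"
  proof (rule Ck_on_local[OF atlas_chart(2)[OF U]])
    fix w assume "w \<in> \<psi> ` U"
    then obtain z where z: "z \<in> U" "w = \<psi> z" by auto
    obtain W h where W: "open W" "z \<in> W" "smooth_fun At h" "\<forall>y\<in>W. f y = h y" using assms by blast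
    have "open (\<psi> ` (U \<inter> W))" using chart_open_image[OF U W(1)] .
    moreover have "Ck_on k (\<psi> ` (U \<inter> W)) (f \<circ> inv_into U \<psi>)"
    proof (rule Ck_on_cong[OF \<open>open (\<psi> ` (U \<inter> W))\<close>])
      show "Ck_on k (\<psi> ` (U \<inter> W)) (h \<circ> inv_into U \<psi>)"
        using smooth_funD[OF W(3) U] by (rule Ck_on_subset) auto
      show "(h \<circ> inv_into U \<psi>) w' = (f \<circ> inv_into U \<psi>) w'" if "w' \<in> \<psi> ` (U \<inter> W)" for w'
        using that atlas_chart(4)[OF U] W(4) by auto
    qed
    ultimately show "\<exists>W. open W \<and> w \<in> W \<and> W \<subseteq> \<psi> ` U \<and> Ck_on k W (f \<circ> inv_into U \<psi>)"
      using z W(2) by blast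
  qed
qed

lemma smooth_fun_const: "smooth_fun At (\<lambda>z. c)"
  by (rule smooth_funI) (simp add: o_def Ck_on_const)

lemma smooth_fun_add: "smooth_fun At f \<Longrightarrow> smooth_fun At g \<Longrightarrow> smooth_fun At (\<lambda>z. f z + g z)"
  by (rule smooth_funI) (simp add: o_def Ck_on_add smooth_funD[unfolded o_def])

lemma smooth_fun_scaleR: "smooth_fun At a \<Longrightarrow> smooth_fun At f \<Longrightarrow> smooth_fun At (\<lambda>z. a z *\<^sub>R f z)"
  by (rule smooth_funI) (simp add: o_def Ck_on_scaleR smooth_funD[unfolded o_def])

lemma smooth_fun_linear_comp: "bounded_linear l \<Longrightarrow> smooth_fun At f \<Longrightarrow> smooth_fun At (\<lambda>z. l (f z))"
  by (rule smooth_funI) (simp add: o_def Ck_on_linear_comp[OF _ smooth_funD[unfolded o_def]])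

lemma smooth_fun_sum:
  "finite I \<Longrightarrow> (\<And>i. i \<in> I \<Longrightarrow> smooth_fun At (f i)) \<Longrightarrow> smooth_fun At (\<lambda>z. \<Sum>i\<in>I. f i z)"
  by (induction I rule: finite_induct) (auto intro: smooth_fun_add smooth_fun_const)

lemma smooth_fun_locally_finite_sum:
  assumes finite_near: "\<And>z. \<exists>W I. open W \<and> z \<in> W \<and> finite I \<and> I \<subseteq> G \<and> (\<forall>y\<in>W. F y \<subseteq> I)"
    and smooth: "\<And>i. i \<in> G \<Longrightarrow> smooth_fun At (f i)"
    and vanish: "\<And>i y. i \<in> G \<Longrightarrow> i \<notin> F y \<Longrightarrow> f i y = 0"
  shows "smooth_fun At (\<lambda>y. \<Sum>i\<in>F y. f i y)"
proof (rule smooth_fun_local)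
  fix z
  obtain W I where W: "open W" "z \<in> W" "finite I" "I \<subseteq> G" "\<forall>y\<in>W. F y \<subseteq> I"
    using finite_near by metis
  have "smooth_fun At (\<lambda>y. \<Sum>i\<in>I. f i y)"
    using W(3,4) smooth by (intro smooth_fun_sum) auto
  moreover have "(\<Sum>i\<in>F y. f i y) = (\<Sum>i\<in>I. f i y)" if "y \<in> W" for y
    using W that vanish by (intro sum.mono_neutral_left) auto
  ultimately show "\<exists>W h. open W \<and> z \<in> W \<and> smooth_fun At h \<and> (\<forall>y\<in>W. (\<Sum>i\<in>F y. f i y) = h y)"
    using W(1,2) by blast
qed

lemma smooth_fun_compose_Ck:
  fixes g :: "'a::euclidean_space \<Rightarrow> 'b::real_normed_vector"
  assumes "open V" "\<And>k. Ck_on k V g" "smooth_fun At f" "range f \<subseteq> V"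
  shows "smooth_fun At (\<lambda>z. g (f z))"
proof (rule smooth_funI)
  fix U \<psi> k assume U: "(U,\<psi>) \<in> At"
  have "Ck_on k (\<psi> ` U) (\<lambda>x. g ((f \<circ> inv_into U \<psi>) x))"
    by (rule Ck_on_compose[OF assms(1,2) smooth_funD[OF assms(3) U] _ atlas_chart(2)[OF U]])
       (use assms(4) in auto)
  then show "Ck_on k (\<psi> ` U) ((\<lambda>z. g (f z)) \<circ> inv_into U \<psi>)" by (simp add: o_def)
qed

lemma smooth_fun_compose_smooth_map:
  assumes h: "smooth_fun At h" and \<phi>: "smooth_map At \<phi>"
  shows "smooth_fun At (\<lambda>z. h (\<phi> z))"
proof (rule smooth_funI)
  fix V \<kappa> k assume V: "(V,\<kappa>) \<in> At"
  show "Ck_on k (\<kappa> ` V) ((\<lambda>z. h (\<phi> z)) \<circ> inv_into V \<kappa>)"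
  proof (rule Ck_on_local[OF atlas_chart(2)[OF V]])
    fix w assume "w \<in> \<kappa> ` V"
    then obtain z where z: "z \<in> V" "w = \<kappa> z" by auto
    obtain U \<psi> where U: "(U,\<psi>) \<in> At" "\<phi> z \<in> U" using atlas_covers by blast
    have "open (\<phi> -` U)"
      using \<phi> atlas_chart(1)[OF U(1)] open_vimage unfolding smooth_map_def by blast
    then have oW: "open (\<kappa> ` (V \<inter> \<phi> -` U))" by (rule chart_open_image[OF V])
    have img: "(\<psi> \<circ> \<phi> \<circ> inv_into V \<kappa>) ` \<kappa> ` (V \<inter> \<phi> -` U) \<subseteq> \<psi> ` U"
      using atlas_chart(4)[OF V] by auto
    have "Ck_on k (\<kappa> ` (V \<inter> \<phi> -` U)) ((\<lambda>z. h (\<phi> z)) \<circ> inv_into V \<kappa>)"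
    proof (rule Ck_on_cong[OF oW])
      show "Ck_on k (\<kappa> ` (V \<inter> \<phi> -` U)) (\<lambda>x. (h \<circ> inv_into U \<psi>) ((\<psi> \<circ> \<phi> \<circ> inv_into V \<kappa>) x))"
        by (rule Ck_on_compose[OF atlas_chart(2)[OF U(1)] smooth_funD[OF h U(1)]
              smooth_mapD[OF \<phi> V U(1)] img oW])
      show "(\<lambda>x. (h \<circ> inv_into U \<psi>) ((\<psi> \<circ> \<phi> \<circ> inv_into V \<kappa>) x)) x = ((\<lambda>z. h (\<phi> z)) \<circ> inv_into V \<kappa>) x"
        if "x \<in> \<kappa> ` (V \<inter> \<phi> -` U)" for x
        using that atlas_chart(4)[OF V] atlas_chart(4)[OF U(1)] by auto
    qed
    then show "\<exists>W. open W \<and> w \<in> W \<and> W \<subseteq> \<kappa> ` V \<and> Ck_on k W ((\<lambda>z. h (\<phi> z)) \<circ> inv_into V \<kappa>)"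
      using oW z U(2) by blast
  qed
qed

lemma chart_cball:
  assumes U: "(U,\<psi>) \<in> At" and "z \<in> U"
  obtains r where "r > 0" "cball (\<psi> z) r \<subseteq> \<psi> ` U"
    "open (U \<inter> \<psi> -` ball (\<psi> z) r)" "compact (inv_into U \<psi> ` cball (\<psi> z) r)"
    "U \<inter> \<psi> -` ball (\<psi> z) r \<subseteq> inv_into U \<psi> ` cball (\<psi> z) r"
    "inv_into U \<psi> ` cball (\<psi> z) r \<subseteq> U"
proof -
  obtain r where r: "r > 0" "cball (\<psi> z) r \<subseteq> \<psi> ` U"
    using open_contains_cball atlas_chart(2)[OF U] \<open>z \<in> U\<close> by blast
  have "open (\<psi> -` ball (\<psi> z) r \<inter> U)"
    using continuous_on_open_vimage[OF atlas_chart(1)[OF U]] atlas_chart(5)[OF U] by blast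
  then have "open (U \<inter> \<psi> -` ball (\<psi> z) r)" by (simp add: Int_commute)
  moreover have "compact (inv_into U \<psi> ` cball (\<psi> z) r)"
    using compact_continuous_image[OF continuous_on_subset[OF atlas_chart(6)[OF U] r(2)]] by simp
  moreover have "U \<inter> \<psi> -` ball (\<psi> z) r \<subseteq> inv_into U \<psi> ` cball (\<psi> z) r"
  proof
    fix y assume "y \<in> U \<inter> \<psi> -` ball (\<psi> z) r"
    then have "y = inv_into U \<psi> (\<psi> y)" "\<psi> y \<in> cball (\<psi> z) r" using atlas_chart(4)[OF U] by auto
    then show "y \<in> inv_into U \<psi> ` cball (\<psi> z) r" by blast
  qed
  moreover have "inv_into U \<psi> ` cball (\<psi> z) r \<subseteq> U"
    using r(2) atlas_chart(7)[OF U] by blast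
  ultimately show ?thesis using that r by blast
qed

lemma atlas_locally_compact:
  fixes z :: 'c
  obtains W K where "open W" "compact K" "z \<in> W" "W \<subseteq> K"
proof -
  obtain U \<psi> where U: "(U,\<psi>) \<in> At" "z \<in> U" using atlas_covers by blast
  then obtain r where "r > 0" "open (U \<inter> \<psi> -` ball (\<psi> z) r)" "compact (inv_into U \<psi> ` cball (\<psi> z) r)"
    "U \<inter> \<psi> -` ball (\<psi> z) r \<subseteq> inv_into U \<psi> ` cball (\<psi> z) r"
    by (rule chart_cball)
  moreover have "z \<in> U \<inter> \<psi> -` ball (\<psi> z) r" using U \<open>r > 0\<close> by auto
  ultimately show ?thesis using that by blast
qed

end

definition smooth_bump_on ::
  "('c::topological_space set \<times> ('c \<Rightarrow> real^'n)) set \<Rightarrow> ('c \<Rightarrow> real) \<Rightarrow> 'c set \<Rightarrow> 'c set \<Rightarrow> bool" where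
  "smooth_bump_on At b S L \<longleftrightarrow>
     smooth_fun At b \<and> (\<forall>z. 0 \<le> b z) \<and> (\<forall>z\<in>S. 0 < b z) \<and> compact L \<and> (\<forall>z. z \<notin> L \<longrightarrow> b z = 0)"

context
  fixes At :: "('c::t2_space set \<times> ('c \<Rightarrow> real^'n)) set"
  assumes atlas: "smooth_atlas At"
begin

lemma smooth_fun_extend_by_zero:
  assumes U: "(U,\<psi>) \<in> At" and "L \<subseteq> U" "closed L" and g: "\<And>k. Ck_on k UNIV g"
    and vanish: "\<And>z. z \<in> U \<Longrightarrow> z \<notin> L \<Longrightarrow> g (\<psi> z) = 0"
  shows "smooth_fun At (\<lambda>z. if z \<in> U then g (\<psi> z) else 0)" (is "smooth_fun At ?b")
proof (rule smooth_funI[OF atlas])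
  fix V \<kappa> k assume V: "(V,\<kappa>) \<in> At"
  show "Ck_on k (\<kappa> ` V) (?b \<circ> inv_into V \<kappa>)"
  proof (rule Ck_on_local[OF atlas_chart(2)[OF atlas V]])
    fix w assume "w \<in> \<kappa> ` V"
    then obtain z where z: "z \<in> V" "w = \<kappa> z" by auto
    \<comment> \<open>the two open sets \<open>U\<close> and \<open>-L\<close> cover the manifold\<close>
    show "\<exists>W. open W \<and> w \<in> W \<and> W \<subseteq> \<kappa> ` V \<and> Ck_on k W (?b \<circ> inv_into V \<kappa>)"
    proof (cases "z \<in> U")
      case True
      have oW: "open (\<kappa> ` (V \<inter> U))" using chart_open_image[OF atlas V atlas_chart(1)[OF atlas U]] .
      have "Ck_on k (\<kappa> ` (V \<inter> U)) (\<lambda>x. g ((\<psi> \<circ> inv_into V \<kappa>) x))"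
        by (rule Ck_on_compose[OF open_UNIV g atlas_transition_Ck[OF atlas V U] _ oW]) simp
      then have "Ck_on k (\<kappa> ` (V \<inter> U)) (?b \<circ> inv_into V \<kappa>)"
        by (rule Ck_on_cong[OF oW]) (auto simp: atlas_chart(4)[OF atlas V])
      then show ?thesis using oW z True by blast
    next
      case False
      have oW: "open (\<kappa> ` (V \<inter> - L))" using chart_open_image[OF atlas V] \<open>closed L\<close> by (simp add: open_Compl)
      have "Ck_on k (\<kappa> ` (V \<inter> - L)) (?b \<circ> inv_into V \<kappa>)"
        by (rule Ck_on_cong[OF oW Ck_on_const]) (auto simp: atlas_chart(4)[OF atlas V] vanish)
      then show ?thesis using oW z False \<open>L \<subseteq> U\<close> by blast
    qed
  qed
qed

lemma exists_smooth_bump: obtains b S L where "open S" "z \<in> S" "smooth_bump_on At b S L"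
proof -
  obtain U \<psi> where U: "(U,\<psi>) \<in> At" "z \<in> U" using atlas_covers[OF atlas] by blast
  then obtain r where r: "r > 0" "open (U \<inter> \<psi> -` ball (\<psi> z) r)" "compact (inv_into U \<psi> ` cball (\<psi> z) r)"
    "U \<inter> \<psi> -` ball (\<psi> z) r \<subseteq> inv_into U \<psi> ` cball (\<psi> z) r"
    "inv_into U \<psi> ` cball (\<psi> z) r \<subseteq> U"
    by (rule chart_cball[OF atlas])
  define S where "S = U \<inter> \<psi> -` ball (\<psi> z) r"
  define L where "L = inv_into U \<psi> ` cball (\<psi> z) r"
  define b where "b y = (if y \<in> U then bump (\<psi> z) r (\<psi> y) else 0)" for y
  have vanish: "bump (\<psi> z) r (\<psi> y) = 0" if "y \<in> U" "y \<notin> L" for y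
  proof -
    have "\<not> dist (\<psi> y) (\<psi> z) < r" using that r(4) unfolding L_def by (auto simp: dist_commute)
    then show ?thesis
      using bump_nonneg[of "\<psi> z" r "\<psi> y"] bump_pos_iff[OF r(1), of "\<psi> z" "\<psi> y"] by linarith
  qed
  have "smooth_fun At b"
    unfolding b_def
  proof (rule smooth_fun_extend_by_zero[OF U(1)])
    show "L \<subseteq> U" "closed L" using r(3,5) by (simp_all add: L_def compact_imp_closed)
  qed (use Ck_on_bump vanish in auto)
  moreover have "\<forall>y\<in>S. 0 < b y" using r(1) by (auto simp: b_def S_def bump_pos_iff dist_commute)
  moreover have "\<forall>y. y \<notin> L \<longrightarrow> b y = 0" by (simp add: b_def vanish)
  ultimately have "smooth_bump_on At b S L"
    using r(3) by (simp add: smooth_bump_on_def b_def bump_nonneg L_def)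
  moreover have "open S" "z \<in> S" using U r(1,2) by (auto simp: S_def)
  ultimately show ?thesis using that by blast
qed

lemma smooth_bump_on_sum:
  assumes "finite I" "\<And>i. i \<in> I \<Longrightarrow> smooth_bump_on At (b i) (S i) (L i)"
  shows "smooth_bump_on At (\<lambda>z. \<Sum>i\<in>I. b i z) (\<Union>i\<in>I. S i) (\<Union>i\<in>I. L i)"
proof -
  have "0 < (\<Sum>i\<in>I. b i z)" if "i \<in> I" "z \<in> S i" for i z
  proof -
    have "0 < b i z" using assms(2) that by (auto simp: smooth_bump_on_def)
    also have "\<dots> \<le> (\<Sum>i\<in>I. b i z)"
      using assms that by (intro member_le_sum) (auto simp: smooth_bump_on_def)
    finally show ?thesis .
  qed
  moreover have "smooth_fun At (\<lambda>z. \<Sum>i\<in>I. b i z)"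
    using assms by (intro smooth_fun_sum[OF atlas]) (auto simp: smooth_bump_on_def)
  moreover have "0 \<le> (\<Sum>i\<in>I. b i z)" for z
    using assms(2) by (intro sum_nonneg) (simp add: smooth_bump_on_def)
  moreover have "compact (\<Union>i\<in>I. L i)"
    using assms by (intro compact_UN) (auto simp: smooth_bump_on_def)
  moreover have "(\<Sum>i\<in>I. b i z) = 0" if "z \<notin> (\<Union>i\<in>I. L i)" for z
    using assms(2) that by (intro sum.neutral) (auto simp: smooth_bump_on_def)
  ultimately show ?thesis unfolding smooth_bump_on_def by blast
qed

lemma exists_smooth_cutoff:
  assumes "compact K"
  obtains b L where "smooth_bump_on At b K L"
proof -
  have "\<forall>z. \<exists>b S L. open S \<and> z \<in> S \<and> smooth_bump_on At b S L"
    using exists_smooth_bump by metis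
  then obtain B S L where BSL: "\<And>z. open (S z)" "\<And>z. z \<in> S z" "\<And>z. smooth_bump_on At (B z) (S z) (L z)"
    by metis
  obtain I where I: "I \<subseteq> K" "finite I" "K \<subseteq> (\<Union>z\<in>I. S z)"
    using compactE_image[OF assms, of K S] BSL(1,2) by blast
  have "smooth_bump_on At (\<lambda>y. \<Sum>z\<in>I. B z y) (\<Union>z\<in>I. S z) (\<Union>z\<in>I. L z)"
    using I(2) BSL(3) by (rule smooth_bump_on_sum)
  then have "smooth_bump_on At (\<lambda>y. \<Sum>z\<in>I. B z y) K (\<Union>z\<in>I. L z)"
    using I(3) unfolding smooth_bump_on_def by blast
  then show ?thesis by (rule that)
qed

end

context
  fixes E1 E2 :: "(real^'p::finite) set"
  assumes complementary: "complementary E1 E2"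
begin

lemma proj_unique: "u \<in> E1 \<Longrightarrow> v - u \<in> E2 \<Longrightarrow> proj E1 E2 v = u"
  unfolding proj_def
proof (rule the_equality)
  fix u' assume u: "u \<in> E1" "v - u \<in> E2" and u': "u' \<in> E1 \<and> v - u' \<in> E2"
  have E: "subspace E1" "subspace E2" "E1 \<inter> E2 = {0}"
    using complementary unfolding complementary_def by auto
  have "u' - u \<in> E1" by (rule subspace_diff[OF E(1)]) (use u u' in auto)
  moreover have "(v - u) - (v - u') \<in> E2" by (rule subspace_diff[OF E(2)]) (use u u' in auto)
  then have "u' - u \<in> E2" by (simp add: algebra_simps)
  ultimately have "u' - u \<in> E1 \<inter> E2" by blast
  then show "u' = u" using E(3) by simp
qed simp

lemma proj_mem: "proj E1 E2 v \<in> E1" and proj_complement_mem: "v - proj E1 E2 v \<in> E2"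
proof -
  have "v \<in> {u + w | u w. u \<in> E1 \<and> w \<in> E2}"
    using complementary unfolding complementary_def by auto
  then obtain u w where "u \<in> E1" "w \<in> E2" "v = u + w" by auto
  then have "proj E1 E2 v = u" by (intro proj_unique) auto
  then show "proj E1 E2 v \<in> E1" "v - proj E1 E2 v \<in> E2" using \<open>u \<in> E1\<close> \<open>w \<in> E2\<close> \<open>v = u + w\<close> by auto
qed

lemma linear_proj: "linear (proj E1 E2)"
proof -
  have E: "subspace E1" "subspace E2" using complementary unfolding complementary_def by auto
  have "proj E1 E2 (v + w) = proj E1 E2 v + proj E1 E2 w" for v w
  proof (rule proj_unique)
    have "(v - proj E1 E2 v) + (w - proj E1 E2 w) \<in> E2"
      by (rule subspace_add[OF E(2) proj_complement_mem proj_complement_mem])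
    then show "v + w - (proj E1 E2 v + proj E1 E2 w) \<in> E2" by (simp add: algebra_simps)
  qed (rule subspace_add[OF E(1) proj_mem proj_mem])
  moreover have "proj E1 E2 (c *\<^sub>R v) = c *\<^sub>R proj E1 E2 v" for c v
  proof (rule proj_unique)
    have "c *\<^sub>R (v - proj E1 E2 v) \<in> E2" by (rule subspace_scale[OF E(2) proj_complement_mem])
    then show "c *\<^sub>R v - c *\<^sub>R proj E1 E2 v \<in> E2" by (simp add: algebra_simps)
  qed (rule subspace_scale[OF E(1) proj_mem])
  ultimately show ?thesis by (rule linearI)
qed

lemma bounded_linear_proj_complement: "bounded_linear (\<lambda>v. v - proj E1 E2 v)"
  using bounded_linear_sub[OF bounded_linear_ident linear_proj[unfolded linear_conv_bounded_linear]] .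

lemma proj_matrix_vector_mult:
  assumes "(\<lambda>v. A *v v) ` E1 = E1" "(\<lambda>v. A *v v) ` E2 = E2"
  shows "proj E1 E2 (A *v v) = A *v proj E1 E2 v"
proof (rule proj_unique)
  show "A *v proj E1 E2 v \<in> E1" using assms(1) proj_mem by blast
  have "A *v (v - proj E1 E2 v) \<in> E2" using assms(2) proj_complement_mem by blast
  then show "A *v v - A *v proj E1 E2 v \<in> E2" by (simp add: matrix_vector_mult_diff_distrib)
qed

end

lemma matrix_vector_mult_uminus: "(A::'a::ring_1^'n^'m) *v (- x) = - (A *v x)"
  by (metis diff_0 matrix_vector_mult_diff_distrib matrix_vector_mult_0_right)

lemma matrix_inv_right: "invertible (A::'a::field^'n^'n) \<Longrightarrow> A ** matrix_inv A = mat 1"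
  and matrix_inv_left: "invertible (A::'a::field^'n^'n) \<Longrightarrow> matrix_inv A ** A = mat 1"
  unfolding matrix_inv_def invertible_def by (metis (mono_tags, lifting) someI_ex)+

lemma matrix_inv_eq: "(A::'a::field^'n^'n) ** B = mat 1 \<Longrightarrow> matrix_inv A = B"
  by (metis invertible_right_inverse matrix_inv_left matrix_mul_assoc matrix_mul_lid matrix_mul_rid)

lemma matrix_inv_mult:
  fixes A B :: "'a::field^'n^'n"
  assumes "invertible A" "invertible B"
  shows "matrix_inv (A ** B) = matrix_inv B ** matrix_inv A"
proof (rule matrix_inv_eq)
  have "A ** B ** (matrix_inv B ** matrix_inv A) = A ** (B ** matrix_inv B) ** matrix_inv A"
    by (simp add: matrix_mul_assoc)
  then show "A ** B ** (matrix_inv B ** matrix_inv A) = mat 1"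
    using assms by (simp add: matrix_inv_right)
qed

abbreviation aut_lin :: "('p::finite,'c) baut \<Rightarrow> real^'p^'p" where
  "aut_lin T \<equiv> fst T"

abbreviation aut_trans :: "('p::finite,'c) baut \<Rightarrow> 'c \<Rightarrow> real^'p" where
  "aut_trans T \<equiv> fst (snd T)"

abbreviation aut_base :: "('p::finite,'c) baut \<Rightarrow> 'c \<Rightarrow> 'c" where
  "aut_base T \<equiv> snd (snd T)"

lemma tcomp_components [simp]:
  "aut_lin (tcomp R T) = aut_lin R ** aut_lin T"
  "aut_trans (tcomp R T) x = aut_lin R *v aut_trans T x + aut_trans R (aut_base T x)"
  "aut_base (tcomp R T) = aut_base R \<circ> aut_base T"
  by (cases R, cases T, simp add: tcomp_def)+

lemma aut_base_tinv [simp]: "aut_base (tinv T) = inv (aut_base T)"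
  by (cases T) (simp add: tinv_def)

lemma tcomp_assoc: "tcomp (tcomp T S) R = tcomp T (tcomp S R)"
  by (cases T, cases S, cases R)
     (simp add: tcomp_def matrix_mul_assoc matrix_vector_mul_assoc[symmetric]
       matrix_vector_right_distrib o_def add.assoc)

lemma tcomp_tid: "tcomp T tid = T"
  by (cases T) (simp add: tcomp_def tid_def o_def)

lemma tcomp_tinv:
  assumes "invertible (aut_lin T)" "bij (aut_base T)"
  shows "tcomp T (tinv T) = tid" and "tcomp (tinv T) T = tid"
  using assms by (cases T,
      simp add: tcomp_def tinv_def tid_def matrix_inv_right matrix_inv_left matrix_vector_mul_assoc
        fun_eq_iff bij_is_inj bij_is_surj surj_f_inv_f matrix_vector_mult_uminus)+

definition zero_preimage :: "('p::finite,'c) baut \<Rightarrow> 'c \<Rightarrow> real^'p" where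
  "zero_preimage T x = - (matrix_inv (aut_lin T) *v aut_trans T x)"

lemma zero_preimage_tcomp:
  assumes "invertible (aut_lin R)" "invertible (aut_lin T)"
  shows "zero_preimage R (aut_base T x) = aut_lin T *v zero_preimage (tcomp R T) x + aut_trans T x"
proof -
  let ?A = "aut_lin T" and ?B = "aut_lin R"
  have "?A *v (matrix_inv (?B ** ?A) *v v) = matrix_inv ?B *v v" for v
    using assms by (simp add: matrix_inv_mult matrix_vector_mul_assoc matrix_mul_assoc
        matrix_inv_right)
  moreover have "matrix_inv ?B *v (?B *v v) = v" for v
    using assms by (simp add: matrix_vector_mul_assoc matrix_inv_left)
  ultimately show ?thesis
    by (simp add: zero_preimage_def matrix_vector_right_distrib matrix_vector_mult_diff_distrib
        matrix_vector_mult_uminus)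
qed

section \<open>Averaging over a properly and cocompactly acting group\<close>

locale equivariant_averaging =
  fixes At :: "('c::topological_space set \<times> ('c \<Rightarrow> real^'n)) set"
    and G :: "('p::finite,'c) baut set"
    and \<rho> :: "'c \<Rightarrow> real" and K L :: "'c set"
  assumes atlas: "smooth_atlas At"
    and G_tcomp: "R \<in> G \<Longrightarrow> T \<in> G \<Longrightarrow> tcomp R T \<in> G"
    and G_tinv: "T \<in> G \<Longrightarrow> tinv T \<in> G"
    and G_invertible: "T \<in> G \<Longrightarrow> invertible (aut_lin T)"
    and G_smooth: "T \<in> G \<Longrightarrow> smooth_fun At (aut_trans T)"
    and G_diffeo: "T \<in> G \<Longrightarrow> diffeo At (aut_base T)"
    and G_proper: "compact C \<Longrightarrow> finite {T \<in> G. aut_base T ` C \<inter> C \<noteq> {}}"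
    and G_cocompact: "(\<Union>T\<in>G. aut_base T ` K) = UNIV"
    and cutoff: "smooth_bump_on At \<rho> K L"
begin

definition active :: "'c \<Rightarrow> ('p,'c) baut set" where
  "active x = {T \<in> G. \<rho> (aut_base T x) \<noteq> 0}"

definition total_weight :: "'c \<Rightarrow> real" where
  "total_weight x = (\<Sum>T\<in>active x. \<rho> (aut_base T x))"

definition weighted_sum :: "'c \<Rightarrow> real^'p" where
  "weighted_sum x = (\<Sum>T\<in>active x. \<rho> (aut_base T x) *\<^sub>R zero_preimage T x)"

definition equivariant_section :: "'c \<Rightarrow> real^'p" where
  "equivariant_section x = inverse (total_weight x) *\<^sub>R weighted_sum x"

lemma cutoff_smooth: "smooth_fun At \<rho>" and cutoff_nonneg: "0 \<le> \<rho> z"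
  and cutoff_pos: "z \<in> K \<Longrightarrow> 0 < \<rho> z" and cutoff_support: "\<rho> z \<noteq> 0 \<Longrightarrow> z \<in> L"
  and compact_support: "compact L"
  using cutoff unfolding smooth_bump_on_def by auto

lemma active_locally_finite:
  "\<exists>W I. open W \<and> z \<in> W \<and> finite I \<and> I \<subseteq> G \<and> (\<forall>y\<in>W. active y \<subseteq> I)"
proof -
  obtain W C where W: "open W" "compact C" "z \<in> W" "W \<subseteq> C"
    by (rule atlas_locally_compact[OF atlas])
  \<comment> \<open>an element active at a point of \<open>C\<close> moves it into the support \<open>L\<close>\<close>
  define I where "I = {T \<in> G. aut_base T ` (C \<union> L) \<inter> (C \<union> L) \<noteq> {}}"
  have "finite I" unfolding I_def using W(2) compact_support by (intro G_proper compact_Un)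
  moreover have "active y \<subseteq> I" if "y \<in> W" for y
  proof
    fix T assume "T \<in> active y"
    then have "T \<in> G" "aut_base T y \<in> L" using cutoff_support by (auto simp: active_def)
    moreover have "y \<in> C \<union> L" using that W(4) by blast
    ultimately show "T \<in> I" unfolding I_def by blast
  qed
  moreover have "I \<subseteq> G" unfolding I_def by blast
  ultimately show ?thesis using W(1,3) by blast
qed

lemma finite_active: "finite (active x)"
  using active_locally_finite[of x] by (meson finite_subset)

lemma smooth_weight: "T \<in> G \<Longrightarrow> smooth_fun At (\<lambda>x. \<rho> (aut_base T x))"
  using smooth_fun_compose_smooth_map[OF atlas cutoff_smooth] G_diffeo by (simp add: diffeo_def)

lemma smooth_total_weight: "smooth_fun At total_weight"
  unfolding total_weight_def
  by (rule smooth_fun_locally_finite_sum[OF atlas active_locally_finite smooth_weight])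
     (simp_all add: active_def)

lemma smooth_weighted_sum: "smooth_fun At weighted_sum"
  unfolding weighted_sum_def
proof (rule smooth_fun_locally_finite_sum[OF atlas active_locally_finite])
  fix T assume "T \<in> G"
  have "smooth_fun At (\<lambda>x. - (matrix_inv (aut_lin T) *v aut_trans T x))"
    by (rule smooth_fun_linear_comp[OF atlas _ G_smooth[OF \<open>T \<in> G\<close>]])
       (intro bounded_linear_minus matrix_vector_mul_bounded_linear)
  then show "smooth_fun At (\<lambda>x. \<rho> (aut_base T x) *\<^sub>R zero_preimage T x)"
    unfolding zero_preimage_def by (rule smooth_fun_scaleR[OF atlas smooth_weight[OF \<open>T \<in> G\<close>]])
qed (simp add: active_def)

lemma total_weight_pos: "0 < total_weight x"
proof -
  obtain T k where T: "T \<in> G" "k \<in> K" "x = aut_base T k" using G_cocompact by blast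
  have "inj (aut_base T)" using G_diffeo[OF T(1)] by (simp add: diffeo_def bij_is_inj)
  then have "aut_base (tinv T) x = k" using T(3) by simp
  then have pos: "0 < \<rho> (aut_base (tinv T) x)" using cutoff_pos T(2) by simp
  then have "tinv T \<in> active x" using G_tinv[OF T(1)] by (simp add: active_def)
  then have "\<rho> (aut_base (tinv T) x) \<le> total_weight x"
    unfolding total_weight_def by (rule member_le_sum[OF _ cutoff_nonneg finite_active])
  then show ?thesis using pos by simp
qed

lemma bij_betw_active:
  assumes "T \<in> G"
  shows "bij_betw (\<lambda>R. tcomp R T) (active (aut_base T x)) (active x)"
proof (rule bij_betw_byWitness[where f'="\<lambda>D. tcomp D (tinv T)"])
  have T: "invertible (aut_lin T)" "bij (aut_base T)"
    using G_invertible[OF assms] G_diffeo[OF assms] by (simp_all add: diffeo_def)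
  show "\<forall>R\<in>active (aut_base T x). tcomp (tcomp R T) (tinv T) = R"
    by (simp add: tcomp_assoc tcomp_tinv[OF T] tcomp_tid)
  show "\<forall>D\<in>active x. tcomp (tcomp D (tinv T)) T = D"
    by (simp add: tcomp_assoc tcomp_tinv[OF T] tcomp_tid)
  show "(\<lambda>R. tcomp R T) ` active (aut_base T x) \<subseteq> active x"
    using G_tcomp[OF _ assms] by (auto simp: active_def)
  show "(\<lambda>D. tcomp D (tinv T)) ` active x \<subseteq> active (aut_base T x)"
    using G_tcomp[OF _ G_tinv[OF assms]] T(2) by (auto simp: active_def bij_is_inj)
qed

lemma total_weight_equivariant:
  assumes "T \<in> G"
  shows "total_weight (aut_base T x) = total_weight x"
proof -
  have "(\<Sum>R\<in>active (aut_base T x). \<rho> (aut_base (tcomp R T) x)) = total_weight x"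
    unfolding total_weight_def by (rule sum.reindex_bij_betw[OF bij_betw_active[OF assms]])
  then show ?thesis by (simp add: total_weight_def)
qed

lemma weighted_sum_equivariant:
  assumes "T \<in> G"
  shows "weighted_sum (aut_base T x) = aut_lin T *v weighted_sum x + total_weight x *\<^sub>R aut_trans T x"
proof -
  have "weighted_sum (aut_base T x) = (\<Sum>R\<in>active (aut_base T x).
      \<rho> (aut_base (tcomp R T) x) *\<^sub>R (aut_lin T *v zero_preimage (tcomp R T) x + aut_trans T x))"
    unfolding weighted_sum_def using G_invertible[OF assms] G_invertible
    by (intro sum.cong) (auto simp: active_def zero_preimage_tcomp)
  also have "\<dots> = (\<Sum>D\<in>active x. \<rho> (aut_base D x) *\<^sub>R (aut_lin T *v zero_preimage D x + aut_trans T x))"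
    by (rule sum.reindex_bij_betw[OF bij_betw_active[OF assms]])
  finally show ?thesis
    by (simp add: weighted_sum_def total_weight_def scaleR_add_right sum.distrib scaleR_sum_left
        matrix_vector_mult_scaleR linear_sum[OF matrix_vector_mul_linear] o_def)
qed

lemma smooth_equivariant_section: "smooth_fun At equivariant_section"
proof -
  have "smooth_fun At (\<lambda>x. inverse (total_weight x))"
    by (rule smooth_fun_compose_Ck[OF atlas open_greaterThan Ck_on_inverse smooth_total_weight])
       (use total_weight_pos in auto)
  then show ?thesis
    unfolding equivariant_section_def by (rule smooth_fun_scaleR[OF atlas _ smooth_weighted_sum])
qed

lemma equivariant_section_equivariant:
  "T \<in> G \<Longrightarrow> equivariant_section (aut_base T x) = aut_lin T *v equivariant_section x + aut_trans T x"
  using total_weight_pos[of x]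
  by (simp add: equivariant_section_def total_weight_equivariant weighted_sum_equivariant
      matrix_vector_mult_scaleR algebra_simps)

end

lemma exists_equivariant_section:
  fixes At :: "('c::t2_space set \<times> ('c \<Rightarrow> real^'n)) set" and G :: "('p::finite,'c) baut set"
  assumes "smooth_atlas At"
    and "\<And>R T. R \<in> G \<Longrightarrow> T \<in> G \<Longrightarrow> tcomp R T \<in> G" "\<And>T. T \<in> G \<Longrightarrow> tinv T \<in> G"
    and "\<And>T. T \<in> G \<Longrightarrow> invertible (aut_lin T)" "\<And>T. T \<in> G \<Longrightarrow> smooth_fun At (aut_trans T)"
    and "\<And>T. T \<in> G \<Longrightarrow> diffeo At (aut_base T)"
    and "\<And>C. compact C \<Longrightarrow> finite {T \<in> G. aut_base T ` C \<inter> C \<noteq> {}}"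
    and "compact K" "(\<Union>T\<in>G. aut_base T ` K) = UNIV"
  shows "\<exists>\<sigma>. smooth_fun At \<sigma> \<and> (\<forall>T\<in>G. \<forall>x. \<sigma> (aut_base T x) = aut_lin T *v \<sigma> x + aut_trans T x)"
proof -
  obtain \<rho> L where "smooth_bump_on At \<rho> K L" using exists_smooth_cutoff[OF assms(1,8)] .
  then interpret equivariant_averaging At G \<rho> K L
    using assms by unfold_locales auto
  show ?thesis using smooth_equivariant_section equivariant_section_equivariant by blast
qed

lemma autZ_iff:
  "autZ At E1 E2 T \<longleftrightarrow> GLZ (aut_lin T) \<and> smooth_fun At (aut_trans T) \<and> diffeo At (aut_base T) \<and>
     (\<exists>c. \<forall>x. proj E1 E2 (aut_trans T x) = c)"
  by (cases T) (simp add: autZ_def)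

lemma mem_Pcls_iff: "T \<in> Pcls T0 \<longleftrightarrow> (\<exists>k\<in>Zvec. T = (aut_lin T0, \<lambda>x. aut_trans T0 x + k, aut_base T0))"
  by (cases T0) (auto simp: Pcls_def)

lemma autT_lift_autZ:
  assumes "complementary E1 E2" "smooth_atlas At" "\<omega> \<in> autT At E1 E2" "T \<in> \<omega>"
  shows "autZ At E1 E2 T"
proof -
  obtain T0 where T0: "\<omega> = Pcls T0" "autZ At E1 E2 T0" using assms(3) by (auto simp: autT_def)
  then obtain k where k: "T = (aut_lin T0, \<lambda>x. aut_trans T0 x + k, aut_base T0)"
    using assms(4) mem_Pcls_iff by blast
  obtain c where "\<forall>x. proj E1 E2 (aut_trans T0 x) = c" using T0(2) by (auto simp: autZ_iff)
  then have "\<forall>x. proj E1 E2 (aut_trans T0 x + k) = c + proj E1 E2 k"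
    using linear_add[OF linear_proj[OF assms(1)]] by simp
  then show ?thesis
    using T0(2) smooth_fun_add[OF assms(2) _ smooth_fun_const[OF assms(2)]] by (auto simp: k autZ_iff)
qed

lemma autT_linpart_resC:
  assumes "\<omega> \<in> autT At E1 E2" "T \<in> \<omega>"
  shows "linpart \<omega> = aut_lin T" "resC \<omega> = aut_base T"
proof -
  obtain T0 where T0: "\<omega> = Pcls T0" using assms(1) by (auto simp: autT_def)
  have same: "aut_lin T' = aut_lin T0 \<and> aut_base T' = aut_base T0" if T': "T' \<in> \<omega>" for T'
  proof -
    obtain k where "T' = (aut_lin T0, \<lambda>x. aut_trans T0 x + k, aut_base T0)"
      using T' unfolding T0 mem_Pcls_iff by blast
    then show ?thesis by simp
  qed
  have "(SOME T. T \<in> \<omega>) \<in> \<omega>" using assms(2) by (rule someI)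
  from same[OF this] same[OF assms(2)] show "linpart \<omega> = aut_lin T" "resC \<omega> = aut_base T"
    unfolding linpart_def resC_def by simp_all
qed

lemma proper_action_lifts:
  assumes "proper_action \<Omega>" "\<And>\<omega>. \<omega> \<in> \<Omega> \<Longrightarrow> resC \<omega> = aut_base (\<iota> \<omega>)" "compact C"
  shows "finite {T \<in> \<iota> ` \<Omega>. aut_base T ` C \<inter> C \<noteq> {}}"
proof -
  have "{T \<in> \<iota> ` \<Omega>. aut_base T ` C \<inter> C \<noteq> {}} = \<iota> ` {\<omega> \<in> \<Omega>. aut_base (\<iota> \<omega>) ` C \<inter> C \<noteq> {}}"
    by blast
  also have "{\<omega> \<in> \<Omega>. aut_base (\<iota> \<omega>) ` C \<inter> C \<noteq> {}} = {\<omega> \<in> \<Omega>. resC \<omega> ` C \<inter> C \<noteq> {}}"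
    using assms(2) by auto
  finally show ?thesis using assms(1,3) by (simp add: proper_action_def)
qed

lemma cocompact_action_lifts:
  assumes "cocompact_action \<Omega>" "\<And>\<omega>. \<omega> \<in> \<Omega> \<Longrightarrow> resC \<omega> = aut_base (\<iota> \<omega>)"
  obtains K where "compact K" "(\<Union>T\<in>\<iota> ` \<Omega>. aut_base T ` K) = UNIV"
proof -
  obtain K where K: "compact K" "(\<Union>\<omega>\<in>\<Omega>. resC \<omega> ` K) = UNIV"
    using assms(1) by (auto simp: cocompact_action_def)
  have "(\<Union>T\<in>\<iota> ` \<Omega>. aut_base T ` K) = UNIV"
    using K(2) by (simp add: assms(2) cong: SUP_cong)
  with K(1) show ?thesis by (rule that)
qed

lemma conjugate_by_E2_component:
  assumes "complementary E1 E2"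
    and "(\<lambda>v. aut_lin T *v v) ` E1 = E1" "(\<lambda>v. aut_lin T *v v) ` E2 = E2"
    and c: "\<forall>x. proj E1 E2 (aut_trans T x) = c"
    and \<sigma>: "\<forall>x. \<sigma> (aut_base T x) = aut_lin T *v \<sigma> x + aut_trans T x"
    and s: "s = (\<lambda>y. \<sigma> y - proj E1 E2 (\<sigma> y))"
  shows "((\<lambda>(b, y). (b - s y, y)) \<circ> bmap T \<circ> (\<lambda>(b, y). (b + s y, y))) (a, x) =
    (aut_lin T *v a + c, aut_base T x)"
proof -
  have "s (aut_base T x) = aut_lin T *v s x + aut_trans T x - c"
    using linear_add[OF linear_proj[OF assms(1)]] proj_matrix_vector_mult[OF assms(1-3)]
    by (simp add: s \<sigma> c matrix_vector_mult_diff_distrib algebra_simps)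
  then show ?thesis by (cases T) (simp add: bmap_def matrix_vector_right_distrib)
qed
theorem mainTheorem16:
  fixes At :: "('c::{t2_space, second_countable_topology} set \<times> ('c \<Rightarrow> real^'n)) set"
    and E1 E2 :: "(real^'p) set"
    and q :: nat
    and \<Omega> :: "('p,'c) baut set set"
    and \<iota> :: "('p,'c) baut set \<Rightarrow> ('p,'c) baut"
  assumes p_ge2: "CARD('p) \<ge> 2"
    and decomp: "complementary E1 E2"
    and dimE1: "dim E1 = q" and q_ge1: "1 \<le> q" and q_le_p: "q \<le> CARD('p)"
    and manifold: "smooth_atlas At"
    and simply_conn: "simply_connected (UNIV :: 'c set)"
    and subgroup: "is_subgroupT At E1 E2 \<Omega>"
    and discrete: "discrete_aut \<Omega>"
    and H_i_proper: "proper_action \<Omega>"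
    and H_i_cocompact: "cocompact_action \<Omega>"
    and H_ii: "\<forall>\<omega>\<in>\<Omega>. (\<lambda>v. linpart \<omega> *v v) ` E1 = E1 \<and> (\<lambda>v. linpart \<omega> *v v) ` E2 = E2"
    and H_iii: "\<exists>g. scalar_product_on E1 g \<and> (\<forall>\<omega>\<in>\<Omega>. similarity_on E1 g (linpart \<omega>)) \<and>
                  (\<exists>\<omega>\<in>\<Omega>. \<not> isometry_on E1 g (linpart \<omega>))"
    and H_iv: "\<forall>\<omega>\<in>\<Omega>. \<forall>x. \<omega> \<noteq> Pcls tid \<and> resC \<omega> x = x \<longrightarrow>
                  (\<forall>T\<in>\<omega>. \<forall>a. bmap T (a, x) \<noteq> (a, x))"
    and free: "\<forall>\<omega>\<in>\<Omega>. \<forall>x. resC \<omega> x = x \<longrightarrow> \<omega> = Pcls tid"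
    and iota_section: "\<forall>\<omega>\<in>\<Omega>. \<iota> \<omega> \<in> \<omega>"
    and tilde_subgroup: "tid \<in> \<iota> ` \<Omega>"
       "\<forall>T1\<in>\<iota> ` \<Omega>. \<forall>T2\<in>\<iota> ` \<Omega>. tcomp T1 T2 \<in> \<iota> ` \<Omega>"
       "\<forall>T\<in>\<iota> ` \<Omega>. tinv T \<in> \<iota> ` \<Omega>"
  shows "\<exists>s :: 'c \<Rightarrow> real^'p. smooth_fun At s \<and> (\<forall>x. s x \<in> E2) \<and>
           (\<forall>\<omega>\<in>\<Omega>. \<exists>c\<in>E1. \<forall>a x.
              ((\<lambda>(b, y). (b - s y, y)) \<circ> bmap (\<iota> \<omega>) \<circ> (\<lambda>(b, y). (b + s y, y))) (a, x)
                = (linpart \<omega> *v a + c, resC \<omega> x))"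
proof -
  have lift: "autZ At E1 E2 (\<iota> \<omega>)" "linpart \<omega> = aut_lin (\<iota> \<omega>)" "resC \<omega> = aut_base (\<iota> \<omega>)"
    if "\<omega> \<in> \<Omega>" for \<omega>
  proof -
    have "\<omega> \<in> autT At E1 E2" using subgroup that unfolding is_subgroupT_def by blast
    moreover have "\<iota> \<omega> \<in> \<omega>" using iota_section that by blast
    ultimately show "autZ At E1 E2 (\<iota> \<omega>)" "linpart \<omega> = aut_lin (\<iota> \<omega>)" "resC \<omega> = aut_base (\<iota> \<omega>)"
      by (rule autT_lift_autZ[OF decomp manifold], (rule autT_linpart_resC)+)
  qed
  obtain K where K: "compact K" "(\<Union>T\<in>\<iota> ` \<Omega>. aut_base T ` K) = UNIV"
    using cocompact_action_lifts[OF H_i_cocompact lift(3)] .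
  have "tcomp R T \<in> \<iota> ` \<Omega>" if "R \<in> \<iota> ` \<Omega>" "T \<in> \<iota> ` \<Omega>" for R T
    using tilde_subgroup(2) that by blast
  moreover have "tinv T \<in> \<iota> ` \<Omega>" if "T \<in> \<iota> ` \<Omega>" for T using tilde_subgroup(3) that by blast
  moreover have "invertible (aut_lin T)" "smooth_fun At (aut_trans T)" "diffeo At (aut_base T)"
    if "T \<in> \<iota> ` \<Omega>" for T
    using lift(1) that by (auto simp: autZ_iff GLZ_def)
  ultimately obtain \<sigma> where \<sigma>: "smooth_fun At \<sigma>"
    "\<forall>T\<in>\<iota> ` \<Omega>. \<forall>x. \<sigma> (aut_base T x) = aut_lin T *v \<sigma> x + aut_trans T x"
    using exists_equivariant_section[OF manifold _ _ _ _ _ proper_action_lifts[OF H_i_proper lift(3)] K]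
    by blast
  define s where "s = (\<lambda>y. \<sigma> y - proj E1 E2 (\<sigma> y))"
  have "smooth_fun At s"
    unfolding s_def by (rule smooth_fun_linear_comp[OF manifold bounded_linear_proj_complement[OF decomp] \<sigma>(1)])
  moreover have "\<forall>x. s x \<in> E2" by (simp add: s_def proj_complement_mem[OF decomp])
  moreover have "\<exists>c\<in>E1. \<forall>a x. ((\<lambda>(b, y). (b - s y, y)) \<circ> bmap (\<iota> \<omega>) \<circ> (\<lambda>(b, y). (b + s y, y))) (a, x)
                 = (linpart \<omega> *v a + c, resC \<omega> x)" if \<omega>: "\<omega> \<in> \<Omega>" for \<omega>
  proof -
    obtain c where c: "\<forall>x. proj E1 E2 (aut_trans (\<iota> \<omega>) x) = c" using lift(1)[OF \<omega>] by (auto simp: autZ_iff)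
    have "(\<lambda>v. aut_lin (\<iota> \<omega>) *v v) ` E1 = E1" "(\<lambda>v. aut_lin (\<iota> \<omega>) *v v) ` E2 = E2"
      using bspec[OF H_ii \<omega>] unfolding lift(2)[OF \<omega>] by simp_all
    note conjugate_by_E2_component[OF decomp this c bspec[OF \<sigma>(2) imageI[OF \<omega>]] s_def]
    moreover have "c \<in> E1" using c proj_mem[OF decomp] by metis
    ultimately show ?thesis unfolding lift(2,3)[OF \<omega>] by blast
  qed
  ultimately show ?thesis by blast
qed

end
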